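(* Let $\mathbb K$ be a field of characteristic $p>0$ and let $x\in\mathbb K$ be transcendental over $\mathbb F_p$. Let $V=\mathbb K^3$, let $\sigma$ be the automorphism of $V$ with matrix $\mathrm{diag}(x+1,\,x,\,1)$, let $L$ be the span of $(1,1,1)^T$ and $R$ the span of $(1,1,0)^T$ and $(1,0,1)^T$. Then the $6$-generated quadratic algebra $A=A(V,L,R,\sigma)$ has Hilbert function $$h_A(n+3)=\begin{cases}11,& n=p^k\text{ for some }k\ge0,\\10,&\text{otherwise},\end{cases}\qquad(n\ge0),$$ which is not eventually periodic; hence the Hilbert series of $A$ is not rational.
   Context: Let $V$ have basis $X=\{x_1,x_2,x_3\}$ (the standard basis of $\mathbb K^3$). The algebra $A(V,L,R,\sigma)$ is the associative $\mathbb K$-algebra generated by $Y=X\cup\{a,b,c\}$ (all of degree $1$; $V$ is identified with the span of $x_1,x_2,x_3$ in degree one of the free algebra) subject to the homogeneous quadratic relations: $x_ix_j$ for all $i,j$; $ya$ and $by$ for all $y\in Y$; $a\ell$ for all $\ell\in L$; $\rho b$ for all $\rho\in R$; and $x_ic-c\,\sigma(x_i)$ for $i=1,2,3$. $h_A(n)=\dim A_n$. *)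

theory Defs
  imports Main "HOL-Library.Function_Algebras" "HOL-Computational_Algebra.Polynomial_FPS"
begin

datatype gen = X1 | X2 | X3 | GA | GB | GC

text \<open>Elements of the free associative algebra K<Y> are represented as coefficient
  functions on words (lists of generators), with finite support.\<close>
type_synonym 'a fa = "gen list \<Rightarrow> 'a"

definition fa_scale :: "'a::field \<Rightarrow> 'a fa \<Rightarrow> 'a fa" where
  "fa_scale c f = (\<lambda>w. c * f w)"

definition fa_mult :: "'a::field fa \<Rightarrow> 'a fa \<Rightarrow> 'a fa" where
  "fa_mult f g = (\<lambda>w. \<Sum>i\<le>length w. f (take i w) * g (drop i w))"

definition fa_word :: "gen list \<Rightarrow> 'a::field fa" where
  "fa_word u = (\<lambda>w. if w = u then 1 else 0)"

text \<open>Vectors of V = K^3 are triples; lin v is v viewed in degree 1 (x_i = e_i).\<close>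
definition lin :: "'a::field \<times> 'a \<times> 'a \<Rightarrow> 'a fa" where
  "lin v = (\<lambda>w. if w = [X1] then fst v else if w = [X2] then fst (snd v)
              else if w = [X3] then snd (snd v) else 0)"

definition xvar :: "nat \<Rightarrow> gen" where
  "xvar i = (if i = 1 then X1 else if i = 2 then X2 else X3)"

definition evec :: "nat \<Rightarrow> 'a::field \<times> 'a \<times> 'a" where
  "evec i = (if i = 1 then (1,0,0) else if i = 2 then (0,1,0) else (0,0,1))"

definition rels :: "('a::field \<times> 'a \<times> 'a) set \<Rightarrow> ('a \<times> 'a \<times> 'a) set
    \<Rightarrow> ('a \<times> 'a \<times> 'a \<Rightarrow> 'a \<times> 'a \<times> 'a) \<Rightarrow> 'a fa set" where
  "rels L R \<sigma> =
     {fa_word [xvar i, xvar j] | i j. i \<in> {1,2,3} \<and> j \<in> {1,2,3}}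
   \<union> {fa_word [y, GA] | y. True}
   \<union> {fa_word [GB, y] | y. True}
   \<union> {fa_mult (fa_word [GA]) (lin l) | l. l \<in> L}
   \<union> {fa_mult (lin \<rho>) (fa_word [GB]) | \<rho>. \<rho> \<in> R}
   \<union> {fa_mult (lin (evec i)) (fa_word [GC]) - fa_mult (fa_word [GC]) (lin (\<sigma> (evec i)))
        | i. i \<in> {1,2,3}}"

definition free_deg :: "nat \<Rightarrow> 'a::field fa set" where
  "free_deg n = {f. \<forall>w. length w \<noteq> n \<longrightarrow> f w = 0}"

definition ideal_deg :: "'a::field fa set \<Rightarrow> nat \<Rightarrow> 'a fa set" where
  "ideal_deg Rel n = module.span fa_scale
     {fa_mult (fa_word u) (fa_mult r (fa_word v)) | u r v.
        r \<in> Rel \<and> length u + 2 + length v = n}"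

text \<open>h_A(n) = dim A_n = dim (F_n / I_n) = dim F_n - dim I_n.\<close>
definition hilbA :: "('a::field \<times> 'a \<times> 'a) set \<Rightarrow> ('a \<times> 'a \<times> 'a) set
    \<Rightarrow> ('a \<times> 'a \<times> 'a \<Rightarrow> 'a \<times> 'a \<times> 'a) \<Rightarrow> nat \<Rightarrow> nat" where
  "hilbA L R \<sigma> n = vector_space.dim fa_scale (free_deg n :: 'a fa set)
                    - vector_space.dim fa_scale (ideal_deg (rels L R \<sigma>) n)"

end

theory Submission
  imports Defs "HOL-Computational_Algebra.Primes"
begin

text \<open>
  Every word in the generators is congruent modulo the relations to a scalar multiple of a
  normal word \<open>a\<^sup>\<alpha> c\<^sup>k x\<^sub>i b\<^sup>\<beta>\<close>; the scalar is computed by a twisted monoid product,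
  because \<open>x\<^sub>i c = \<lambda>\<^sub>i c x\<^sub>i\<close> with \<open>(\<lambda>\<^sub>1, \<lambda>\<^sub>2, \<lambda>\<^sub>3) = (x + 1, x, 1)\<close>. In degree \<open>n + 3\<close> the
  relations \<open>a(x\<^sub>1 + x\<^sub>2 + x\<^sub>3)\<close>, \<open>(x\<^sub>1 + x\<^sub>2)b\<close> and \<open>(x\<^sub>1 + x\<^sub>3)b\<close> eliminate all normal words
  but ten, and also \<open>a c\<^sup>n x\<^sub>1 b\<close> unless \<open>(x + 1)\<^sup>n = x\<^sup>n + 1\<close>. Linear functionals that
  vanish on the ideal and are dual to the surviving words show that these are independent.

  For transcendental \<open>x\<close>, \<open>(x + 1)\<^sup>n = x\<^sup>n + 1\<close> holds exactly when \<open>n\<close> is a power of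
  \<open>p\<close>: write \<open>n = p\<^sup>v r\<close> with \<open>p\<close> not dividing \<open>r\<close> and put \<open>y = x^(p\<^sup>v)\<close>; then
  \<open>(y + 1)\<^sup>r = y\<^sup>r + 1\<close>, so for \<open>r > 1\<close> the element \<open>y\<close> would be a root of
  \<open>\<Sum>0<j<r. (r choose j) X\<^sup>j\<close>, whose linear coefficient \<open>r\<close> is nonzero. A sequence with
  isolated spikes at the powers of \<open>p\<close> is neither eventually periodic nor a solution of a
  linear recurrence, so its generating function is not rational.
\<close>

lemma UNIV_gen: "(UNIV :: gen set) = {X1, X2, X3, GA, GB, GC}"
  by (auto intro: gen.exhaust)

lemma finite_words_length: "finite {w :: gen list. length w = m}"
proof -
  have "finite {w :: gen list. set w \<subseteq> UNIV \<and> length w = m}"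
    by (rule finite_lists_length_eq) (simp add: UNIV_gen)
  then show ?thesis by simp
qed

interpretation fa: vector_space "fa_scale :: 'a::field \<Rightarrow> 'a fa \<Rightarrow> 'a fa"
  by unfold_locales (auto simp: fa_scale_def fun_eq_iff algebra_simps)

lemma fa_mult_word_apply:
  "fa_mult (fa_word u) h w = (if take (length u) w = u then h (drop (length u) w) else (0::'a::field))"
proof -
  have "fa_mult (fa_word u) h w
      = (\<Sum>i\<le>length w. if i = length u then (if take (length u) w = u then h (drop (length u) w) else 0) else 0)"
    unfolding fa_mult_def fa_word_def by (intro sum.cong refl) auto
  also have "\<dots> = (if take (length u) w = u then h (drop (length u) w) else 0)"
    by (auto simp: sum.delta' dest: arg_cong[where f=length])
  finally show ?thesis .
qed

lemma fa_mult_word_word: "fa_mult (fa_word u) (fa_word v) = (fa_word (u @ v) :: 'a::field fa)"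
  by (rule ext) (simp only: fa_mult_word_apply, auto simp: fa_word_def, metis append_take_drop_id)

lemma take_append_take_drop:
  assumes "take (length a) w @ take (length b) (drop (length a) w) = a @ b"
  shows "take (length a) w = a"
  using assms by (cases "length a \<le> length w") auto

lemma fa_mult_word_assoc:
  "fa_mult (fa_word u) (fa_mult (fa_word v) f) = fa_mult (fa_word (u @ v)) (f :: 'a::field fa)"
  by (rule ext) (auto simp: fa_mult_word_apply take_add add.commute dest: take_append_take_drop)

lemma fa_mult_add_left: "fa_mult (f + g) h = fa_mult f h + (fa_mult g h :: 'a::field fa)"
  by (rule ext) (simp add: fa_mult_def sum.distrib algebra_simps)

lemma fa_mult_add_right: "fa_mult h (f + g) = fa_mult h f + (fa_mult h g :: 'a::field fa)"
  by (rule ext) (simp add: fa_mult_def sum.distrib algebra_simps)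

lemma fa_mult_diff_left: "fa_mult (f - g) h = fa_mult f h - (fa_mult g h :: 'a::field fa)"
  by (rule ext) (simp add: fa_mult_def sum_subtractf algebra_simps)

lemma fa_mult_diff_right: "fa_mult h (f - g) = fa_mult h f - (fa_mult h g :: 'a::field fa)"
  by (rule ext) (simp add: fa_mult_def sum_subtractf algebra_simps)

lemma fa_mult_scale_left: "fa_mult (fa_scale c f) h = fa_scale c (fa_mult f h :: 'a::field fa)"
  by (rule ext) (simp add: fa_mult_def fa_scale_def sum_distrib_left algebra_simps)

lemma fa_mult_scale_right: "fa_mult h (fa_scale c f) = fa_scale c (fa_mult h f :: 'a::field fa)"
  by (rule ext) (simp add: fa_mult_def fa_scale_def sum_distrib_left algebra_simps)

lemma fa_mult_zero_right [simp]: "fa_mult f 0 = (0::'a::field fa)"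
  by (simp add: fa_mult_def fun_eq_iff)

lemmas fa_mult_simps = fa_mult_add_left fa_mult_add_right fa_mult_diff_left fa_mult_diff_right
  fa_mult_scale_left fa_mult_scale_right fa_mult_word_word

lemma fa_zero_eta [simp]: "(\<lambda>w. 0) = (0::'a::field fa)"
  by (simp add: fun_eq_iff)

lemma fa_scale_diff: "fa_scale c (f - g) = fa_scale c f - fa_scale c (g :: 'a::field fa)"
  by (simp add: fa_scale_def fun_eq_iff algebra_simps)

lemma fa_scale_scale: "fa_scale c (fa_scale d f) = fa_scale (c * d) (f :: 'a::field fa)"
  by (simp add: fa_scale_def fun_eq_iff)

lemma lin_expand:
  "lin (a, b, c) = fa_scale a (fa_word [X1]) + fa_scale b (fa_word [X2]) + (fa_scale c (fa_word [X3]) :: 'a::field fa)"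
  by (rule ext) (auto simp: lin_def fa_scale_def fa_word_def)

lemma sum_fun_apply: "(sum F A :: 'b \<Rightarrow> 'c::comm_monoid_add) w = (\<Sum>a\<in>A. F a w)"
  by (induction A rule: infinite_finite_induct) auto

lemma free_deg_eq_sum_words:
  assumes "f \<in> free_deg m"
  shows "f = (\<Sum>w\<in>{w. length w = m}. fa_scale (f w) (fa_word w))"
proof
  fix v
  have "\<And>w. fa_scale (f w) (fa_word w) v = (if w = v then f v else 0)"
    by (simp add: fa_scale_def fa_word_def)
  then have "(\<Sum>w\<in>{w. length w = m}. fa_scale (f w) (fa_word w)) v = (\<Sum>w\<in>{w. length w = m}. if w = v then f v else 0)"
    by (simp only: sum_fun_apply)
  also have "\<dots> = f v"
    using assms by (simp add: finite_words_length free_deg_def)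
  finally show "f v = (\<Sum>w\<in>{w. length w = m}. fa_scale (f w) (fa_word w)) v" by simp
qed

lemma free_deg_subset_span_words: "free_deg m \<subseteq> fa.span (fa_word ` {w. length w = m} :: 'a::field fa set)"
proof
  fix f :: "'a fa" assume "f \<in> free_deg m"
  then have "f = (\<Sum>w\<in>{w. length w = m}. fa_scale (f w) (fa_word w))"
    by (rule free_deg_eq_sum_words)
  also have "\<dots> \<in> fa.span (fa_word ` {w. length w = m})"
    by (intro fa.span_sum fa.span_scale fa.span_base) auto
  finally show "f \<in> fa.span (fa_word ` {w. length w = m})" .
qed

lemma subspace_free_deg: "fa.subspace (free_deg m :: 'a::field fa set)"
  by (auto simp: fa.subspace_def free_deg_def fa_scale_def)

lemma fa_word_in_free_deg: "length w = m \<Longrightarrow> fa_word w \<in> free_deg m"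
  by (auto simp: free_deg_def fa_word_def)

lemma subspace_ideal_deg: "fa.subspace (ideal_deg Rel m)"
  unfolding ideal_deg_def by (rule fa.subspace_span)

lemma ideal_deg_generator:
  "r \<in> Rel \<Longrightarrow> length u + 2 + length v = m \<Longrightarrow> fa_mult (fa_word u) (fa_mult r (fa_word v)) \<in> ideal_deg Rel m"
  unfolding ideal_deg_def by (rule fa.span_base) blast

lemma ideal_deg_word:
  "fa_word s \<in> Rel \<Longrightarrow> length u + length s + length v = m \<Longrightarrow> length s = 2 \<Longrightarrow> fa_word (u @ s @ v) \<in> ideal_deg Rel m"
  using ideal_deg_generator[of "fa_word s" Rel u v m] by (simp add: fa_mult_word_word)

lemma ideal_deg_zero: "0 \<in> ideal_deg Rel m"
  unfolding ideal_deg_def by (rule fa.span_zero)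

lemma ideal_deg_add: "f \<in> ideal_deg Rel m \<Longrightarrow> g \<in> ideal_deg Rel m \<Longrightarrow> f + g \<in> ideal_deg Rel m"
  unfolding ideal_deg_def by (rule fa.span_add)

lemma ideal_deg_diff: "f \<in> ideal_deg Rel m \<Longrightarrow> g \<in> ideal_deg Rel m \<Longrightarrow> f - g \<in> ideal_deg Rel m"
  unfolding ideal_deg_def by (rule fa.span_diff)

lemma ideal_deg_scale: "f \<in> ideal_deg Rel m \<Longrightarrow> fa_scale c f \<in> ideal_deg Rel m"
  unfolding ideal_deg_def by (rule fa.span_scale)

lemma ideal_deg_diff_trans:
  "f - g \<in> ideal_deg Rel m \<Longrightarrow> g - h \<in> ideal_deg Rel m \<Longrightarrow> f - h \<in> ideal_deg Rel m"
  using ideal_deg_add by fastforce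

lemma ideal_deg_mult_gen_left:
  assumes "f \<in> ideal_deg Rel m"
  shows "fa_mult (fa_word [g]) f \<in> ideal_deg Rel (Suc m)"
  using assms unfolding ideal_deg_def
proof (induction rule: fa.span_induct_alt)
  case base
  show ?case by (simp add: fa.span_zero)
next
  case (step c y z)
  then obtain u r v where y: "y = fa_mult (fa_word u) (fa_mult r (fa_word v))" "r \<in> Rel"
    "length u + 2 + length v = m" by blast
  have "fa_mult (fa_word [g]) y \<in> ideal_deg Rel (Suc m)"
    using ideal_deg_generator[of r Rel "g # u" v "Suc m"] y by (simp add: fa_mult_word_assoc)
  moreover have "fa_mult (fa_word [g]) (fa_scale c y + z)
      = fa_scale c (fa_mult (fa_word [g]) y) + fa_mult (fa_word [g]) z"
    by (simp only: fa_mult_simps)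
  ultimately show ?case
    using step(2) unfolding ideal_deg_def by (simp only:) (intro fa.span_add fa.span_scale)
qed

lemma fa_mult_free_deg:
  assumes "f \<in> free_deg a" and "g \<in> free_deg b"
  shows "fa_mult f g \<in> free_deg (a + b)"
  unfolding free_deg_def
proof safe
  fix w :: "gen list" assume w: "length w \<noteq> a + b"
  have "f (take i w) * g (drop i w) = 0" if "i \<le> length w" for i
    using assms w that by (cases "i = a") (auto simp: free_deg_def min_def)
  then show "fa_mult f g w = 0"
    unfolding fa_mult_def by (intro sum.neutral) auto
qed

lemma ideal_deg_subset_free_deg:
  assumes "Rel \<subseteq> free_deg 2"
  shows "ideal_deg Rel m \<subseteq> free_deg m"
proof -
  have "fa_mult (fa_word u) (fa_mult r (fa_word v)) \<in> free_deg m"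
    if "r \<in> Rel" "length u + 2 + length v = m" for u v r
  proof -
    have "fa_mult (fa_word u) (fa_mult r (fa_word v)) \<in> free_deg (length u + (2 + length v))"
      using that assms by (intro fa_mult_free_deg fa_word_in_free_deg) auto
    then show ?thesis using that by (simp add: add.assoc)
  qed
  then show ?thesis
    unfolding ideal_deg_def by (intro fa.span_minimal[OF _ subspace_free_deg]) blast
qed

section \<open>Dimension count with a dual family of functionals\<close>

context vector_space
begin

lemma functional_linear_combination:
  assumes "finite J"
    and add: "\<And>u v. \<phi> (u + v) = \<phi> u + \<phi> v"
    and scale: "\<And>c u. \<phi> (scale c u) = c * \<phi> u"
  shows "\<phi> (\<Sum>j\<in>J. scale (c j) (e j)) = (\<Sum>j\<in>J. c j * \<phi> (e j))"
  using assms(1)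
proof (induction J rule: finite_induct)
  case empty
  show ?case using scale[of 0 0] by simp
qed (simp add: add scale)

lemma dual_family_inj:
  assumes "\<And>j j'. j \<in> J \<Longrightarrow> j' \<in> J \<Longrightarrow> \<phi> j (e j') = (if j = j' then (1::'a) else 0)"
  shows "inj_on e J"
proof (rule inj_onI)
  fix j j' assume "j \<in> J" "j' \<in> J" "e j = e j'"
  then have "\<phi> j (e j) = \<phi> j (e j')" by simp
  with assms[OF \<open>j \<in> J\<close>] \<open>j \<in> J\<close> \<open>j' \<in> J\<close> show "j = j'" by (auto split: if_splits)
qed

lemma dual_family_coeff:
  assumes J: "finite J"
    and add: "\<And>j u v. j \<in> J \<Longrightarrow> \<phi> j (u + v) = \<phi> j u + \<phi> j v"
    and scale: "\<And>j c u. j \<in> J \<Longrightarrow> \<phi> j (scale c u) = c * \<phi> j u"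
    and dual: "\<And>j j'. j \<in> J \<Longrightarrow> j' \<in> J \<Longrightarrow> \<phi> j (e j') = (if j = j' then 1 else 0)"
    and "j \<in> J"
  shows "\<phi> j (\<Sum>j'\<in>J. scale (c j') (e j')) = c j"
proof -
  have "\<phi> j (\<Sum>j'\<in>J. scale (c j') (e j')) = (\<Sum>j'\<in>J. c j' * \<phi> j (e j'))"
    using J by (rule functional_linear_combination) (simp_all add: add scale \<open>j \<in> J\<close>)
  also have "\<dots> = (\<Sum>j'\<in>J. if j = j' then c j else 0)"
    by (rule sum.cong) (simp_all add: dual \<open>j \<in> J\<close>)
  finally show ?thesis using J \<open>j \<in> J\<close> by simp
qed

lemma independent_Un_dual_family:
  assumes B: "independent B" "finite B" "B \<subseteq> S" "subspace S"
    and J: "finite J"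
    and add: "\<And>j u v. j \<in> J \<Longrightarrow> \<phi> j (u + v) = \<phi> j u + \<phi> j v"
    and scale: "\<And>j c u. j \<in> J \<Longrightarrow> \<phi> j (scale c u) = c * \<phi> j u"
    and vanish: "\<And>j s. j \<in> J \<Longrightarrow> s \<in> S \<Longrightarrow> \<phi> j s = 0"
    and dual: "\<And>j j'. j \<in> J \<Longrightarrow> j' \<in> J \<Longrightarrow> \<phi> j (e j') = (if j = j' then 1 else 0)"
  shows "independent (B \<union> e ` J)"
proof (rule independent_if_scalars_zero)
  show "finite (B \<union> e ` J)" using B(2) J by simp
  have disj: "B \<inter> e ` J = {}"
    using B(3) vanish dual by force
  have inj: "inj_on e J"
    using dual by (rule dual_family_inj)
  fix f v assume zero: "(\<Sum>x\<in>B \<union> e ` J. scale (f x) x) = 0" and v: "v \<in> B \<union> e ` J"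
  define sB where "sB = (\<Sum>x\<in>B. scale (f x) x)"
  have "(\<Sum>x\<in>e ` J. scale (f x) x) = (\<Sum>j\<in>J. scale (f (e j)) (e j))"
    by (rule sum.reindex[OF inj, unfolded comp_def])
  then have sum_0: "sB + (\<Sum>j\<in>J. scale (f (e j)) (e j)) = 0"
    using zero sum.union_disjoint[OF B(2) _ disj, of "\<lambda>x. scale (f x) x"] J by (simp add: sB_def)
  then have "(\<Sum>j\<in>J. scale (- f (e j)) (e j)) = sB"
    by (simp add: sum_negf) (metis add.commute minus_unique)
  moreover have "sB \<in> S"
    unfolding sB_def using B(3,4) by (intro subspace_sum subspace_scale) auto
  ultimately have fJ: "f (e j) = 0" if "j \<in> J" for j
    using dual_family_coeff[OF J add scale dual that, of "\<lambda>j. - f (e j)"] vanish that by simp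
  then have "sB = 0"
    using sum_0 by simp
  then have "f b = 0" if "b \<in> B" for b
    using independentD[OF B(1,2) subset_refl] that by (simp add: sB_def)
  with fJ v show "f v = 0" by blast
qed

lemma dim_Un_dual_family:
  assumes S: "subspace S" "S \<subseteq> span W" "finite W"
    and J: "finite J"
    and add: "\<And>j u v. j \<in> J \<Longrightarrow> \<phi> j (u + v) = \<phi> j u + \<phi> j v"
    and scale: "\<And>j c u. j \<in> J \<Longrightarrow> \<phi> j (scale c u) = c * \<phi> j u"
    and vanish: "\<And>j s. j \<in> J \<Longrightarrow> s \<in> S \<Longrightarrow> \<phi> j s = 0"
    and dual: "\<And>j j'. j \<in> J \<Longrightarrow> j' \<in> J \<Longrightarrow> \<phi> j (e j') = (if j = j' then 1 else 0)"
  shows "dim (S \<union> e ` J) = dim S + card J"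
proof -
  obtain B where B: "B \<subseteq> S" "independent B" "S \<subseteq> span B" "card B = dim S"
    using basis_exists by blast
  have "finite B"
    using independent_span_bound[OF S(3) B(2)] B(1) S(2) by blast
  have "span B = S"
    using B(1,3) S(1) span_minimal span_subspace by blast
  moreover have "span S = S"
    using S(1) by (simp add: span_eq_iff)
  ultimately have "span (B \<union> e ` J) = span (S \<union> e ` J)"
    by (simp only: span_Un)
  moreover have "independent (B \<union> e ` J)"
    using independent_Un_dual_family[OF B(2) \<open>finite B\<close> B(1) S(1) J add scale vanish dual] .
  ultimately have "dim (S \<union> e ` J) = card (B \<union> e ` J)"
    by (rule dim_eq_card)
  also have "\<dots> = dim S + card J"
    using B(1,4) \<open>finite B\<close> J vanish dual card_image[OF dual_family_inj[of J \<phi> e]]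
    by (subst card_Un_disjoint) force+
  finally show ?thesis .
qed

end

section \<open>Additivity of \<open>n\<close>-th powers at a transcendental element\<close>

definition power_additive :: "'a::field \<Rightarrow> nat \<Rightarrow> bool" where
  "power_additive x n \<longleftrightarrow> (x + 1) ^ n = x ^ n + 1"

lemma power_additive_prime_power:
  assumes "prime CHAR('a)"
  shows "power_additive (x::'a::field) (CHAR('a) ^ k)"
  using freshmans_dream'[OF assms refl, of x 1] by (simp add: power_additive_def)

lemma binomial_inner_sum_eq_0:
  fixes y :: "'a::comm_ring_1"
  assumes "(y + 1) ^ r = y ^ r + 1" and "2 \<le> r"
  shows "(\<Sum>j\<in>{1..<r}. of_nat (r choose j) * y ^ j) = 0"
proof -
  have "{..r} = insert 0 (insert r {1..<r})" using assms(2) by auto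
  then have "(y + 1) ^ r = 1 + (y ^ r + (\<Sum>j\<in>{1..<r}. of_nat (r choose j) * y ^ j))"
    using assms(2) by (simp add: binomial_ring[of y 1 r])
  with assms(1) show ?thesis by (simp add: add.commute)
qed

lemma power_additive_power_exponent_le_1:
  fixes x :: "'a::field"
  assumes transc: "\<And>q :: 'a poly. q \<noteq> 0 \<Longrightarrow> (\<forall>i. coeff q i \<in> range of_nat) \<Longrightarrow> poly q x \<noteq> 0"
    and "\<not> CHAR('a) dvd r" and "P > 0" and "power_additive (x ^ P) r"
  shows "r \<le> 1"
proof (rule ccontr)
  assume "\<not> r \<le> 1"
  then have r2: "2 \<le> r" by simp
  define q :: "'a poly" where "q = (\<Sum>j\<in>{1..<r}. monom (of_nat (r choose j)) (P * j))"
  have coeff_q: "coeff q i = of_nat (\<Sum>j\<in>{1..<r}. if P * j = i then r choose j else 0)" for i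
    unfolding q_def coeff_sum of_nat_sum by (intro sum.cong refl) simp
  have "(\<Sum>j\<in>{1..<r}. if P * j = P then r choose j else 0) = (\<Sum>j\<in>{1..<r}. if j = 1 then r choose j else 0)"
    using \<open>P > 0\<close> by (intro sum.cong refl) auto
  then have "coeff q P = of_nat r" using r2 by (simp add: coeff_q)
  moreover have "(of_nat r :: 'a) \<noteq> 0" using assms(2) by (simp add: of_nat_eq_0_iff_char_dvd)
  ultimately have "q \<noteq> 0" by auto
  moreover have "poly q x = 0"
    using binomial_inner_sum_eq_0[of "x ^ P" r] assms(4) r2
    by (simp add: power_additive_def q_def poly_sum poly_monom power_mult)
  moreover have "\<forall>i. coeff q i \<in> range of_nat"
    unfolding coeff_q by blast
  ultimately show False using transc by blast
qed

lemma power_additive_imp_prime_power: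
  fixes x :: "'a::field"
  assumes p: "prime CHAR('a)"
    and transc: "\<And>q :: 'a poly. q \<noteq> 0 \<Longrightarrow> (\<forall>i. coeff q i \<in> range of_nat) \<Longrightarrow> poly q x \<noteq> 0"
    and add: "power_additive x n"
  shows "\<exists>k. n = CHAR('a) ^ k"
proof -
  have "n \<noteq> 0"
  proof
    assume "n = 0"
    with add have "(1::'a) + 0 = 1 + 1" by (simp add: power_additive_def)
    then have "(0::'a) = 1" by (rule add_left_imp_eq)
    then show False by simp
  qed
  moreover have "\<not> is_unit CHAR('a)" using p by simp
  ultimately obtain r where nr: "n = CHAR('a) ^ multiplicity CHAR('a) n * r" and "\<not> CHAR('a) dvd r"
    by (rule multiplicity_decompose')
  define P where "P = CHAR('a) ^ multiplicity CHAR('a) n"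
  have "n = P * r" unfolding P_def by (rule nr)
  have "(x + 1) ^ P = x ^ P + 1"
    using power_additive_prime_power[OF p] by (simp add: P_def power_additive_def)
  with add have "power_additive (x ^ P) r"
    by (simp add: power_additive_def \<open>n = P * r\<close> power_mult)
  moreover have "P > 0" using p by (simp add: P_def prime_gt_0_nat)
  ultimately have "r \<le> 1"
    using power_additive_power_exponent_le_1[OF transc \<open>\<not> CHAR('a) dvd r\<close>] by blast
  moreover have "r \<noteq> 0" using \<open>n = P * r\<close> \<open>n \<noteq> 0\<close> by auto
  ultimately have "r = 1" by simp
  with \<open>n = P * r\<close> show ?thesis unfolding P_def by auto
qed

lemma power_additive_iff_prime_power:
  fixes x :: "'a::field"
  assumes "prime CHAR('a)"
    and "\<And>q :: 'a poly. q \<noteq> 0 \<Longrightarrow> (\<forall>i. coeff q i \<in> range of_nat) \<Longrightarrow> poly q x \<noteq> 0"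
  shows "power_additive x n \<longleftrightarrow> (\<exists>k. n = CHAR('a) ^ k)"
  using power_additive_imp_prime_power[OF assms] power_additive_prime_power[OF assms(1)] by blast

section \<open>Sequences with spikes at the powers of \<open>p\<close>\<close>

lemma add_not_power:
  assumes "1 < (p::nat)" and "0 < j" and "j < p ^ k"
  shows "p ^ k + j \<noteq> p ^ e"
proof
  assume e: "p ^ k + j = p ^ e"
  then have "p ^ k < p ^ e" using assms(2) by simp
  then have "k < e" using power_less_imp_less_exp[OF assms(1)] by blast
  have "p ^ e < 2 * p ^ k" using e assms(3) by simp
  also have "\<dots> \<le> p ^ Suc k" using assms(1) by simp
  finally have "e < Suc k" using power_less_imp_less_exp[OF assms(1)] by blast
  with \<open>k < e\<close> show False by simp
qed

locale power_spikes =
  fixes h :: "nat \<Rightarrow> 'b" and p c :: nat and A B :: 'b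
  assumes p: "1 < p" and spikes: "\<And>n. h (n + c) = (if \<exists>k. n = p ^ k then A else B)"
begin

lemma exponent_less_power: "k < p ^ k"
  using p by (simp add: power_gt_expt)

lemma at_power: "h (p ^ k + c) = A"
  using spikes by auto

lemma after_power: "0 < j \<Longrightarrow> j < p ^ k \<Longrightarrow> h (p ^ k + j + c) = B"
  using spikes[of "p ^ k + j"] add_not_power[OF p] by auto

end

lemma power_spikes_not_eventually_periodic:
  assumes "power_spikes h p c A B" and "A \<noteq> B"
  shows "\<not> (\<exists>T>0. \<exists>N. \<forall>n\<ge>N. h (n + T) = h n)"
proof
  interpret power_spikes h p c A B by fact
  assume "\<exists>T>0. \<exists>N. \<forall>n\<ge>N. h (n + T) = h n"
  then obtain T N where "T > 0" and periodic: "\<And>n. n \<ge> N \<Longrightarrow> h (n + T) = h n" by blast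
  define k where "k = T + N"
  have "k < p ^ k" by (rule exponent_less_power)
  then have "h (p ^ k + T + c) = B" using \<open>T > 0\<close> by (intro after_power) (auto simp: k_def)
  moreover have "h (p ^ k + T + c) = h (p ^ k + c)"
    using periodic[of "p ^ k + c"] \<open>k < p ^ k\<close> by (simp add: k_def ac_simps)
  ultimately show False using at_power \<open>A \<noteq> B\<close> by simp
qed

lemma power_spikes_not_rational:
  fixes h :: "nat \<Rightarrow> 'a::field"
  assumes "power_spikes h p c A B" and "A \<noteq> B"
  shows "\<not> (\<exists>P Q. Q \<noteq> 0 \<and> fps_of_poly Q * Abs_fps h = fps_of_poly P)"
proof
  interpret power_spikes h p c A B by fact
  assume "\<exists>P Q. Q \<noteq> 0 \<and> fps_of_poly Q * Abs_fps h = fps_of_poly P"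
  then obtain P Q where "Q \<noteq> 0" and eq: "fps_of_poly Q * Abs_fps h = fps_of_poly P" by blast
  define d where "d = degree Q"
  define S where "S n = (\<Sum>i=0..d. coeff Q i * h (n - i))" for n
  have S0: "S n = 0" if "degree P < n" "d \<le> n" for n
  proof -
    have "coeff P n = (\<Sum>i=0..n. coeff Q i * h (n - i))"
      using arg_cong[OF eq, of "\<lambda>f. fps_nth f n"] by (simp add: fps_mult_nth)
    also have "\<dots> = S n" unfolding S_def
      by (rule sum.mono_neutral_right) (use that in \<open>auto simp: d_def coeff_eq_0\<close>)
    finally show ?thesis using that by (simp add: coeff_eq_0)
  qed
  define k where "k = d + degree P + 2"
  have "k < p ^ k" by (rule exponent_less_power)
  have step: "h (p ^ k + c + d - i) = h (p ^ k + c + d + 1 - i) + (if i = d then A - B else 0)"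
    if "i \<in> {0..d}" for i
  proof -
    have "h (p ^ k + c + d + 1 - i) = B"
      using after_power[of "d - i + 1" k] that \<open>k < p ^ k\<close>
      by (simp add: k_def Suc_diff_le add.commute add.left_commute)
    moreover have "h (p ^ k + c + d - i) = (if i = d then A else B)"
      using at_power[of k] after_power[of "d - i" k] that \<open>k < p ^ k\<close>
      by (auto simp: k_def add.commute add.left_commute)
    ultimately show ?thesis by simp
  qed
  have "S (p ^ k + c + d) = S (p ^ k + c + d + 1) + coeff Q d * (A - B)"
    unfolding S_def by (simp add: step distrib_left sum.distrib if_distrib[of "(*) _"] cong: if_cong)
  moreover have "S (p ^ k + c + d) = 0" "S (p ^ k + c + d + 1) = 0"
    using \<open>k < p ^ k\<close> by (auto intro!: S0 simp: k_def)
  ultimately have "coeff Q d = 0" using \<open>A \<noteq> B\<close> by simp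
  with \<open>Q \<noteq> 0\<close> show False by (simp add: d_def)
qed

text \<open>Since \<open>\<sigma>\<close> is diagonal, the relation \<open>x\<^sub>i c - c \<sigma>(x\<^sub>i)\<close> reads \<open>x\<^sub>i c - \<lambda>\<^sub>i c x\<^sub>i\<close>
  with \<open>\<lambda>\<^sub>i = eigen_ex x i\<close>.\<close>

definition sigma_ex :: "'a::field \<Rightarrow> 'a \<times> 'a \<times> 'a \<Rightarrow> 'a \<times> 'a \<times> 'a" where
  "sigma_ex x = (\<lambda>(v1, v2, v3). ((x + 1) * v1, x * v2, v3))"

definition L_ex :: "('a::field \<times> 'a \<times> 'a) set" where
  "L_ex = {(c, c, c) | c. True}"

definition R_ex :: "('a::field \<times> 'a \<times> 'a) set" where
  "R_ex = {(c + d, c, d) | c d. True}"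

definition eigen_ex :: "'a::field \<Rightarrow> nat \<Rightarrow> 'a" where
  "eigen_ex x i = (if i = 1 then x + 1 else if i = 2 then x else 1)"

abbreviation rels_ex :: "'a::field \<Rightarrow> 'a fa set" where
  "rels_ex x \<equiv> rels L_ex R_ex (sigma_ex x)"

abbreviation ideal_ex :: "'a::field \<Rightarrow> nat \<Rightarrow> 'a fa set" where
  "ideal_ex x m \<equiv> ideal_deg (rels_ex x) m"

lemma commutation_relation_ex:
  "i \<in> {1,2,3} \<Longrightarrow>
   fa_mult (lin (evec i)) (fa_word [GC]) - fa_mult (fa_word [GC]) (lin (sigma_ex x (evec i)))
     = fa_word [xvar i, GC] - fa_scale (eigen_ex x i) (fa_word [GC, xvar i])"
  by (auto simp: evec_def sigma_ex_def lin_expand fa_mult_simps eigen_ex_def xvar_def)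

lemma rels_exE:
  assumes "r \<in> rels_ex x"
  obtains (x_x) i j where "r = fa_word [xvar i, xvar j]"
  | (y_a) y where "r = fa_word [y, GA]"
  | (b_y) y where "r = fa_word [GB, y]"
  | (a_L) t where "r = fa_scale t (fa_word [GA, X1]) + fa_scale t (fa_word [GA, X2]) + fa_scale t (fa_word [GA, X3])"
  | (R_b) c d where "r = fa_scale (c + d) (fa_word [X1, GB]) + fa_scale c (fa_word [X2, GB]) + fa_scale d (fa_word [X3, GB])"
  | (x_c) i where "i \<in> {1,2,3}" "r = fa_word [xvar i, GC] - fa_scale (eigen_ex x i) (fa_word [GC, xvar i])"
proof -
  from assms consider (x_x) i j where "r = fa_word [xvar i, xvar j]"
    | (y_a) y where "r = fa_word [y, GA]"
    | (b_y) y where "r = fa_word [GB, y]"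
    | (a_L) l where "r = fa_mult (fa_word [GA]) (lin l)" "l \<in> L_ex"
    | (R_b) \<rho> where "r = fa_mult (lin \<rho>) (fa_word [GB])" "\<rho> \<in> R_ex"
    | (x_c) i where "i \<in> {1,2,3}" "r = fa_mult (lin (evec i)) (fa_word [GC]) - fa_mult (fa_word [GC]) (lin (sigma_ex x (evec i)))"
    unfolding rels_def by blast
  then show ?thesis
  proof cases
    case (a_L l)
    then obtain t where "l = (t, t, t)" by (auto simp: L_ex_def)
    then show ?thesis using a_L that(4)[of t] by (simp add: lin_expand fa_mult_simps)
  next
    case (R_b \<rho>)
    then obtain c d where "\<rho> = (c + d, c, d)" by (auto simp: R_ex_def)
    then show ?thesis using R_b that(5)[of c d] by (simp add: lin_expand fa_mult_simps)
  next
    case (x_c i)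
    then show ?thesis using that(6)[of i] commutation_relation_ex[of i x] by simp
  qed (use that in blast)+
qed

lemma rels_ex_x_x: "i \<in> {1,2,3} \<Longrightarrow> j \<in> {1,2,3} \<Longrightarrow> fa_word [xvar i, xvar j] \<in> rels_ex x"
  unfolding rels_def by blast

lemma rels_ex_y_a: "fa_word [y, GA] \<in> rels_ex x"
  unfolding rels_def by blast

lemma rels_ex_b_y: "fa_word [GB, y] \<in> rels_ex x"
  unfolding rels_def by blast

lemma rels_ex_a_L:
  "fa_scale t (fa_word [GA, X1]) + fa_scale t (fa_word [GA, X2]) + fa_scale t (fa_word [GA, X3]) \<in> rels_ex x"
proof -
  have "(t, t, t) \<in> (L_ex :: ('a \<times> 'a \<times> 'a) set)" by (auto simp: L_ex_def)
  then have "fa_mult (fa_word [GA]) (lin (t, t, t)) \<in> rels_ex x" unfolding rels_def by blast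
  then show ?thesis by (simp add: lin_expand fa_mult_simps)
qed

lemma rels_ex_R_b:
  "fa_scale (c + d) (fa_word [X1, GB]) + fa_scale c (fa_word [X2, GB]) + fa_scale d (fa_word [X3, GB]) \<in> rels_ex x"
proof -
  have "(c + d, c, d) \<in> (R_ex :: ('a \<times> 'a \<times> 'a) set)" by (auto simp: R_ex_def)
  then have "fa_mult (lin (c + d, c, d)) (fa_word [GB]) \<in> rels_ex x" unfolding rels_def by blast
  then show ?thesis by (simp add: lin_expand fa_mult_simps)
qed

lemma rels_ex_x_c:
  assumes "i \<in> {1,2,3}"
  shows "fa_word [xvar i, GC] - fa_scale (eigen_ex x i) (fa_word [GC, xvar i]) \<in> rels_ex x"
proof -
  have "fa_mult (lin (evec i)) (fa_word [GC]) - fa_mult (fa_word [GC]) (lin (sigma_ex x (evec i))) \<in> rels_ex x"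
    using assms unfolding rels_def by blast
  then show ?thesis unfolding commutation_relation_ex[OF assms] .
qed

lemma rels_ex_subset_free_deg: "rels_ex x \<subseteq> free_deg 2"
proof
  fix r assume "r \<in> rels_ex x"
  then show "r \<in> free_deg 2"
    by (cases rule: rels_exE) (auto simp: free_deg_def fa_word_def fa_scale_def)
qed

lemma ideal_ex_word:
  "fa_word s \<in> rels_ex x \<Longrightarrow> length s = 2 \<Longrightarrow> fa_word (u @ s @ v) \<in> ideal_ex x (length u + 2 + length v)"
  by (rule ideal_deg_word) simp_all

lemma ideal_ex_relation:
  "r \<in> rels_ex x \<Longrightarrow> fa_mult (fa_word u) (fa_mult r (fa_word v)) \<in> ideal_ex x (length u + 2 + length v)"
  by (rule ideal_deg_generator) simp_all

lemma ideal_ex_push_x_past_c: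
  assumes i: "i \<in> {1,2,3}"
  shows "fa_word (u @ xvar i # replicate k GC @ t) - fa_scale (eigen_ex x i ^ k) (fa_word (u @ replicate k GC @ xvar i # t))
         \<in> ideal_ex x (length u + k + 1 + length t)"
proof (induction k arbitrary: u)
  case 0
  then show ?case by (simp add: ideal_deg_zero)
next
  case (Suc k)
  have step: "fa_word (u @ [xvar i, GC] @ replicate k GC @ t)
      - fa_scale (eigen_ex x i) (fa_word (u @ [GC, xvar i] @ replicate k GC @ t))
       \<in> ideal_ex x (length u + Suc k + 1 + length t)"
    using ideal_ex_relation[OF rels_ex_x_c[OF i], where u=u and v="replicate k GC @ t"]
    by (simp add: fa_mult_simps add.assoc)
  have "fa_word ((u @ [GC]) @ xvar i # replicate k GC @ t)
      - fa_scale (eigen_ex x i ^ k) (fa_word ((u @ [GC]) @ replicate k GC @ xvar i # t))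
       \<in> ideal_ex x (length u + Suc k + 1 + length t)"
    using Suc.IH[of "u @ [GC]"] by (simp add: fun_diff_def)
  then have "fa_scale (eigen_ex x i) (fa_word (u @ [GC, xvar i] @ replicate k GC @ t))
      - fa_scale (eigen_ex x i ^ Suc k) (fa_word (u @ replicate (Suc k) GC @ xvar i # t))
       \<in> ideal_ex x (length u + Suc k + 1 + length t)"
    using ideal_deg_scale[of _ _ _ "eigen_ex x i"]
    by (fastforce simp: fa_scale_diff fa_scale_scale replicate_app_Cons_same)
  from ideal_deg_diff_trans[OF step this] show ?case by (simp add: fun_diff_def)
qed

section \<open>Normal words\<close>

text \<open>\<open>(\<alpha>, k, i, \<beta>)\<close> encodes the word \<open>a\<^sup>\<alpha> c\<^sup>k x\<^sub>i b\<^sup>\<beta>\<close>, where \<open>i = 0\<close> means that no \<open>x\<close> occurs.\<close>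

type_synonym nmon = "bool \<times> nat \<times> nat \<times> bool"

type_synonym 'a smon = "'a \<times> nmon"

abbreviation nmon_one :: nmon where
  "nmon_one \<equiv> (False, 0, 0, False)"

fun nmon_mult :: "nmon \<Rightarrow> nmon \<Rightarrow> nmon" where
  "nmon_mult (a1, k1, i1, b1) (a2, k2, i2, b2) = (a1 \<or> a2, k1 + k2, if i1 = 0 then i2 else i1, b1 \<or> b2)"

text \<open>A product of normal words vanishes modulo the relations when a letter precedes \<open>a\<close>,
  follows \<open>b\<close>, or two \<open>x\<close>'s meet; otherwise moving \<open>x\<^sub>i\<close> to the right past \<open>c\<^sup>k\<close> costs \<open>\<lambda>\<^sub>i\<^sup>k\<close>.\<close>

fun twist :: "'a::field \<Rightarrow> nmon \<Rightarrow> nmon \<Rightarrow> 'a" where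
  "twist x (a1, k1, i1, b1) (a2, k2, i2, b2) =
     (if (b1 \<and> (a2, k2, i2, b2) \<noteq> nmon_one) \<or> (a2 \<and> (a1, k1, i1, b1) \<noteq> nmon_one) \<or> (i1 \<noteq> 0 \<and> i2 \<noteq> 0) then 0
      else if i1 \<noteq> 0 then eigen_ex x i1 ^ k2 else 1)"

definition smon_mult :: "'a::field \<Rightarrow> 'a smon \<Rightarrow> 'a smon \<Rightarrow> 'a smon" where
  "smon_mult x P Q = (fst P * fst Q * twist x (snd P) (snd Q), nmon_mult (snd P) (snd Q))"

fun gen_nmon :: "gen \<Rightarrow> nmon" where
  "gen_nmon X1 = (False, 0, 1, False)"
| "gen_nmon X2 = (False, 0, 2, False)"
| "gen_nmon X3 = (False, 0, 3, False)"
| "gen_nmon GA = (True, 0, 0, False)"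
| "gen_nmon GB = (False, 0, 0, True)"
| "gen_nmon GC = (False, 1, 0, False)"

fun word_smon :: "'a::field \<Rightarrow> gen list \<Rightarrow> 'a smon" where
  "word_smon x [] = (1, nmon_one)"
| "word_smon x (g # w) = smon_mult x (1, gen_nmon g) (word_smon x w)"

fun nmon_word :: "nmon \<Rightarrow> gen list" where
  "nmon_word (a, k, i, b) =
     (if a then [GA] else []) @ replicate k GC @ (if i = 0 then [] else [xvar i]) @ (if b then [GB] else [])"

declare nmon_word.simps [simp del]

fun nmon_deg :: "nmon \<Rightarrow> nat" where
  "nmon_deg (a, k, i, b) = (if a then 1 else 0) + k + (if i = 0 then 0 else 1) + (if b then 1 else 0)"

definition fa_of_smon :: "'a::field smon \<Rightarrow> 'a fa" where
  "fa_of_smon P = fa_scale (fst P) (fa_word (nmon_word (snd P)))"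

lemma length_nmon_word: "length (nmon_word M) = nmon_deg M"
  by (cases M) (auto simp: nmon_word.simps)

lemma smon_mult_one_left: "smon_mult x (1, nmon_one) P = P"
  by (cases P) (auto simp: smon_mult_def)

lemma nmon_mult_assoc: "nmon_mult (nmon_mult M N) K = nmon_mult M (nmon_mult N K)"
  by (cases M; cases N; cases K) auto

lemma twist_assoc:
  "twist x M N * twist x (nmon_mult M N) K = twist x N K * twist x M (nmon_mult N K)"
  by (cases M; cases N; cases K) (auto simp: power_add)

lemma smon_mult_assoc: "smon_mult x (smon_mult x P Q) S = smon_mult x P (smon_mult x Q S)"
proof -
  have "fst P * fst Q * twist x (snd P) (snd Q) * fst S * twist x (nmon_mult (snd P) (snd Q)) (snd S)
      = fst P * (fst Q * fst S * twist x (snd Q) (snd S)) * twist x (snd P) (nmon_mult (snd Q) (snd S))"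
    using twist_assoc[of x "snd P" "snd Q" "snd S"] by (simp add: algebra_simps)
  then show ?thesis by (simp add: smon_mult_def nmon_mult_assoc)
qed

lemma word_smon_append: "word_smon x (u @ v) = smon_mult x (word_smon x u) (word_smon x v)"
  by (induction u) (simp_all add: smon_mult_one_left smon_mult_assoc)

lemma word_smon_x_index: "snd (word_smon x w) = (a, k, i, b) \<Longrightarrow> i \<le> 3"
proof (induction w arbitrary: a k i b)
  case (Cons g w)
  then show ?case
    by (cases "snd (word_smon x w)", cases g) (auto simp: smon_mult_def)
qed simp

lemma nmon_deg_mult: "twist x M N \<noteq> 0 \<Longrightarrow> nmon_deg (nmon_mult M N) = nmon_deg M + nmon_deg N"
  by (cases M; cases N) (auto split: if_splits)

lemma word_smon_deg: "fst (word_smon x w) \<noteq> 0 \<Longrightarrow> nmon_deg (snd (word_smon x w)) = length w"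
proof (induction w)
  case (Cons g w)
  then have "fst (word_smon x w) \<noteq> 0" "twist x (gen_nmon g) (snd (word_smon x w)) \<noteq> 0"
    by (auto simp: smon_mult_def)
  with Cons show ?case by (cases g) (simp_all add: smon_mult_def nmon_deg_mult)
qed simp

lemma gen_nmon_xvar: "j \<in> {1,2,3} \<Longrightarrow> gen_nmon (xvar j) = (False, 0, j, False)"
  by (auto simp: xvar_def)

lemma ideal_ex_gen_a:
  assumes a
  shows "fa_word (g # nmon_word (a, k, i, b)) \<in> ideal_ex x (Suc (nmon_deg (a, k, i, b)))"
proof -
  define rest where "rest = replicate k GC @ (if i = 0 then [] else [xvar i]) @ (if b then [GB] else [])"
  have "fa_word ([] @ [g, GA] @ rest) \<in> ideal_ex x (length ([] :: gen list) + 2 + length rest)"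
    by (rule ideal_ex_word[OF rels_ex_y_a]) simp
  moreover have "nmon_word (a, k, i, b) = GA # rest" "nmon_deg (a, k, i, b) = Suc (length rest)"
    using assms by (simp_all add: rest_def nmon_word.simps)
  ultimately show ?thesis by simp
qed

lemma reduce_x_nmon:
  assumes j: "j \<in> {1,2,3}" and i: "i \<le> 3"
  shows "fa_word (xvar j # nmon_word (a, k, i, b)) - fa_of_smon (smon_mult x (1, gen_nmon (xvar j)) (1, (a, k, i, b)))
     \<in> ideal_ex x (Suc (nmon_deg (a, k, i, b)))"
proof -
  define bs where "bs = (if b then [GB] else [])"
  have j0: "j \<noteq> 0" using j by auto
  note smon_simps = smon_mult_def fa_of_smon_def gen_nmon_xvar[OF j] j0 nmon_word.simps
  consider "a" | "\<not> a" "i = 0" | "\<not> a" "i \<noteq> 0" by blast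
  then show ?thesis
  proof cases
    case 1
    then show ?thesis using ideal_ex_gen_a[of a "xvar j" k i b x] by (simp add: smon_simps)
  next
    case 2
    have "fa_word ([] @ xvar j # replicate k GC @ bs) - fa_scale (eigen_ex x j ^ k) (fa_word ([] @ replicate k GC @ xvar j # bs))
       \<in> ideal_ex x (length ([]::gen list) + k + 1 + length bs)"
      by (rule ideal_ex_push_x_past_c[OF j])
    with 2 show ?thesis by (cases b) (simp_all add: smon_simps bs_def)
  next
    case 3
    then have i3: "i \<in> {1,2,3}" using i by auto
    have pushed: "fa_word (xvar j # replicate k GC @ xvar i # bs)
        - fa_scale (eigen_ex x j ^ k) (fa_word (replicate k GC @ xvar j # xvar i # bs))
       \<in> ideal_ex x (Suc (nmon_deg (a, k, i, b)))"
      using ideal_ex_push_x_past_c[OF j, of "[]" k "xvar i # bs" x] 3 by (cases b) (simp_all add: bs_def)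
    have "fa_word (replicate k GC @ [xvar j, xvar i] @ bs) \<in> ideal_ex x (Suc (nmon_deg (a, k, i, b)))"
      using ideal_ex_word[OF rels_ex_x_x[OF j i3], of "replicate k GC" bs] 3 by (cases b) (simp_all add: bs_def)
    from ideal_deg_add[OF pushed ideal_deg_scale[OF this, of "eigen_ex x j ^ k"]]
    have "fa_word (xvar j # replicate k GC @ xvar i # bs) \<in> ideal_ex x (Suc (nmon_deg (a, k, i, b)))"
      by (simp only: append.simps diff_add_cancel)
    with 3 show ?thesis by (simp add: smon_simps bs_def)
  qed
qed

lemma reduce_gen_nmon:
  assumes i: "i \<le> 3"
  shows "fa_word (g # nmon_word (a, k, i, b)) - fa_of_smon (smon_mult x (1, gen_nmon g) (1, (a, k, i, b)))
     \<in> ideal_ex x (Suc (nmon_deg (a, k, i, b)))"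
proof -
  note a_kills = ideal_ex_gen_a[where g=g and k=k and i=i and b=b]
  show ?thesis
  proof (cases g)
    case X1 then show ?thesis using reduce_x_nmon[of 1 i a k b x] i by (simp add: xvar_def)
  next
    case X2 then show ?thesis using reduce_x_nmon[of 2 i a k b x] i by (simp add: xvar_def)
  next
    case X3 then show ?thesis using reduce_x_nmon[of 3 i a k b x] i by (simp add: xvar_def)
  next
    case GA then show ?thesis using a_kills[of a] by (cases a) (auto simp: smon_mult_def fa_of_smon_def ideal_deg_zero nmon_word.simps)
  next
    case GC then show ?thesis using a_kills[of a] by (cases a) (auto simp: smon_mult_def fa_of_smon_def ideal_deg_zero nmon_word.simps)
  next
    case GB
    show ?thesis
    proof (cases "(a, k, i, b) = nmon_one")
      case False
      then obtain y rest where yr: "nmon_word (a, k, i, b) = y # rest"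
        by (cases "nmon_word (a, k, i, b)") (auto simp: nmon_word.simps split: if_splits)
      have "fa_word ([] @ [GB, y] @ rest) \<in> ideal_ex x (Suc (nmon_deg (a, k, i, b)))"
        using ideal_ex_word[OF rels_ex_b_y, of y "[]" rest x] yr by (simp flip: length_nmon_word)
      with yr False GB show ?thesis by (simp add: smon_mult_def fa_of_smon_def)
    qed (simp add: GB smon_mult_def fa_of_smon_def ideal_deg_zero nmon_word.simps)
  qed
qed

lemma reduce_word: "fa_word w - fa_of_smon (word_smon x w) \<in> ideal_ex x (length w)"
proof (induction w)
  case Nil
  then show ?case by (simp add: fa_of_smon_def ideal_deg_zero nmon_word.simps)
next
  case (Cons g w)
  obtain l a k i b where w: "word_smon x w = (l, (a, k, i, b))" by (cases "word_smon x w") auto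
  let ?P = "smon_mult x (1, gen_nmon g) (1, (a, k, i, b))"
  have gw: "word_smon x (g # w) = (l * fst ?P, snd ?P)"
    by (simp add: w smon_mult_def)
  have "fa_mult (fa_word [g]) (fa_word w - fa_scale l (fa_word (nmon_word (a, k, i, b)))) \<in> ideal_ex x (Suc (length w))"
    using ideal_deg_mult_gen_left[OF Cons.IH] by (simp add: w fa_of_smon_def fun_diff_def)
  then have left: "fa_word (g # w) - fa_scale l (fa_word (g # nmon_word (a, k, i, b))) \<in> ideal_ex x (Suc (length w))"
    by (simp add: fa_mult_simps)
  show ?case
  proof (cases "l = 0")
    case True
    then show ?thesis using left unfolding gw by (simp add: fa_of_smon_def)
  next
    case False
    have "i \<le> 3" using word_smon_x_index[of x w] w by simp
    moreover have "nmon_deg (a, k, i, b) = length w" using word_smon_deg[of x w] w False by simp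
    ultimately have "fa_word (g # nmon_word (a, k, i, b)) - fa_of_smon ?P \<in> ideal_ex x (Suc (length w))"
      using reduce_gen_nmon by metis
    from ideal_deg_scale[OF this, of l]
    have "fa_scale l (fa_word (g # nmon_word (a, k, i, b))) - fa_of_smon (word_smon x (g # w)) \<in> ideal_ex x (Suc (length w))"
      unfolding gw fa_of_smon_def by (simp add: fa_scale_diff fa_scale_scale)
    from ideal_deg_diff_trans[OF left this] show ?thesis by (simp only: length_Cons)
  qed
qed

lemma ideal_ex_x_b_sums:
  "fa_word (u @ [X1, GB]) + fa_word (u @ [X2, GB]) \<in> ideal_ex x (length u + 2)"
  "fa_word (u @ [X1, GB]) + fa_word (u @ [X3, GB]) \<in> ideal_ex x (length u + 2)"
  using ideal_ex_relation[OF rels_ex_R_b[of 1 0], where u=u and v="[]"]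
    ideal_ex_relation[OF rels_ex_R_b[of 0 1], where u=u and v="[]"]
  by (simp_all add: fa_mult_simps)

lemma ideal_ex_a_x_c:
  "fa_scale ((x + 1) ^ k) (fa_word (GA # replicate k GC @ X1 # t))
     + fa_scale (x ^ k) (fa_word (GA # replicate k GC @ X2 # t))
     + fa_word (GA # replicate k GC @ X3 # t) \<in> ideal_ex x (k + 2 + length t)"
proof -
  define A where "A j = (fa_word (GA # xvar j # replicate k GC @ t) :: 'a fa)" for j
  define W where "W j = (fa_word (GA # replicate k GC @ xvar j # t) :: 'a fa)" for j
  have sum: "A 1 + A 2 + A 3 \<in> ideal_ex x (k + 2 + length t)"
    using ideal_ex_relation[OF rels_ex_a_L[of 1], where u="[]" and v="replicate k GC @ t"]
    by (simp add: fa_mult_simps A_def xvar_def algebra_simps)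
  have push: "A j - fa_scale (eigen_ex x j ^ k) (W j) \<in> ideal_ex x (k + 2 + length t)" if "j \<in> {1,2,3}" for j
    using ideal_ex_push_x_past_c[OF that, of "[GA]" k t x] by (simp add: A_def W_def algebra_simps)
  have "(A 1 + A 2 + A 3) - (A 1 - fa_scale (eigen_ex x 1 ^ k) (W 1))
      - (A 2 - fa_scale (eigen_ex x 2 ^ k) (W 2)) - (A 3 - fa_scale (eigen_ex x 3 ^ k) (W 3))
      \<in> ideal_ex x (k + 2 + length t)"
    by (intro ideal_deg_diff sum push) auto
  then show ?thesis by (simp add: W_def eigen_ex_def xvar_def add.assoc)
qed

text \<open>Besides ten words that always survive, \<open>a c\<^sup>n x\<^sub>1 b\<close> survives only if
  \<open>(x + 1)\<^sup>n = x\<^sup>n + 1\<close>: the relation \<open>a(x\<^sub>1 + x\<^sub>2 + x\<^sub>3) c\<^sup>n b\<close> with the \<open>x\<close>'s moved past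
  \<open>c\<^sup>n\<close>, together with \<open>x\<^sub>2 b \<equiv> x\<^sub>3 b \<equiv> -x\<^sub>1 b\<close>, gives \<open>((x + 1)\<^sup>n - x\<^sup>n - 1) a c\<^sup>n x\<^sub>1 b \<equiv> 0\<close>.\<close>

definition basis_nmons :: "'a::field \<Rightarrow> nat \<Rightarrow> nmon set" where
  "basis_nmons x n =
     {(False, n + 3, 0, False), (False, n + 2, 1, False), (False, n + 2, 2, False), (False, n + 2, 3, False),
      (True, n + 2, 0, False), (True, n + 1, 1, False), (True, n + 1, 2, False),
      (False, n + 2, 0, True), (False, n + 1, 1, True), (True, n + 1, 0, True)}
     \<union> (if power_additive x n then {(True, n, 1, True)} else {})"

abbreviation basis_words :: "'a::field \<Rightarrow> nat \<Rightarrow> 'a fa set" where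
  "basis_words x n \<equiv> (\<lambda>M. fa_word (nmon_word M)) ` basis_nmons x n"

abbreviation basis_span :: "'a::field \<Rightarrow> nat \<Rightarrow> 'a fa set" where
  "basis_span x n \<equiv> fa.span (ideal_ex x (n + 3) \<union> basis_words x n)"

lemma ideal_in_basis_span: "f \<in> ideal_ex x (n + 3) \<Longrightarrow> f \<in> basis_span x n"
  by (rule fa.span_base) simp

lemma basis_nmon_in_basis_span: "M \<in> basis_nmons x n \<Longrightarrow> fa_word (nmon_word M) \<in> basis_span x n"
  by (rule fa.span_base) simp

lemma x_b_in_basis_span:
  assumes "fa_word (u @ [X1, GB]) \<in> basis_span x n" and "length u + 2 = n + 3"
  shows "fa_word (u @ [X2, GB]) \<in> basis_span x n" "fa_word (u @ [X3, GB]) \<in> basis_span x n"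
proof -
  have "fa_word (u @ [X1, GB]) + fa_word (u @ [Xi, GB]) \<in> basis_span x n"
    if "fa_word (u @ [X1, GB]) + fa_word (u @ [Xi, GB]) \<in> ideal_ex x (length u + 2)" for Xi
    using that assms(2) ideal_in_basis_span[of _ x n] by (simp add: eval_nat_numeral)
  with ideal_ex_x_b_sums[of u x] assms(1) show
    "fa_word (u @ [X2, GB]) \<in> basis_span x n" "fa_word (u @ [X3, GB]) \<in> basis_span x n"
    by (metis add_diff_cancel_left' fa.span_diff)+
qed

lemma a_x_b_in_basis_span:
  assumes "i \<in> {1,2,3}"
  shows "fa_word (GA # replicate n GC @ [xvar i, GB]) \<in> (basis_span x n :: 'a::field fa set)"
proof -
  have "fa_word ((GA # replicate n GC) @ [X1, GB]) \<in> (basis_span x n :: 'a fa set)"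
  proof (cases "power_additive x n")
    case True
    then show ?thesis
      using basis_nmon_in_basis_span[of "(True, n, 1, True)" x n]
      by (simp add: basis_nmons_def nmon_word.simps xvar_def)
  next
    case False
    define W where "W j = (fa_word (GA # replicate n GC @ [j, GB]) :: 'a fa)" for j
    have "fa_scale ((x + 1) ^ n) (W X1) + fa_scale (x ^ n) (W X2) + W X3 \<in> ideal_ex x (n + 3)"
      using ideal_ex_a_x_c[of x n "[GB]"] by (simp add: W_def eval_nat_numeral)
    moreover have "W X1 + W X2 \<in> ideal_ex x (n + 3)" "W X1 + W X3 \<in> ideal_ex x (n + 3)"
      using ideal_ex_x_b_sums[of "GA # replicate n GC" x] by (simp_all add: W_def eval_nat_numeral)
    ultimately have "(fa_scale ((x + 1) ^ n) (W X1) + fa_scale (x ^ n) (W X2) + W X3)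
        - fa_scale (x ^ n) (W X1 + W X2) - (W X1 + W X3) \<in> ideal_ex x (n + 3)"
      by (intro ideal_deg_diff ideal_deg_scale)
    moreover have "(fa_scale ((x + 1) ^ n) (W X1) + fa_scale (x ^ n) (W X2) + W X3)
        - fa_scale (x ^ n) (W X1 + W X2) - (W X1 + W X3) = fa_scale ((x + 1) ^ n - x ^ n - 1) (W X1)"
      by (simp add: fa_scale_def fun_eq_iff algebra_simps)
    ultimately have "fa_scale ((x + 1) ^ n - x ^ n - 1) (W X1) \<in> ideal_ex x (n + 3)"
      by simp
    moreover have "(x + 1) ^ n - x ^ n - 1 \<noteq> 0"
      using False by (auto simp: power_additive_def diff_eq_eq)
    ultimately have "W X1 \<in> ideal_ex x (n + 3)"
      using ideal_deg_scale[of _ _ _ "inverse ((x + 1) ^ n - x ^ n - 1)"] by (fastforce simp: fa_scale_scale)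
    then show ?thesis by (simp add: W_def ideal_in_basis_span)
  qed
  then show ?thesis
    using assms x_b_in_basis_span[of "GA # replicate n GC" x n] by (auto simp: xvar_def)
qed

lemma a_x3_in_basis_span:
  "fa_word (GA # replicate (n + 1) GC @ [X3]) \<in> (basis_span x n :: 'a::field fa set)"
proof -
  define W where "W j = (fa_word (GA # replicate (n + 1) GC @ [j]) :: 'a fa)" for j
  have "fa_scale ((x + 1) ^ (n + 1)) (W X1) + fa_scale (x ^ (n + 1)) (W X2) + W X3 \<in> basis_span x n"
    using ideal_ex_a_x_c[of x "n + 1" "[]"] ideal_in_basis_span[of _ x n] by (simp add: W_def eval_nat_numeral)
  moreover have "W X1 \<in> basis_span x n" "W X2 \<in> basis_span x n"
    using basis_nmon_in_basis_span[of "(True, n + 1, 1, False)" x n]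
      basis_nmon_in_basis_span[of "(True, n + 1, 2, False)" x n]
    by (simp_all add: W_def basis_nmons_def nmon_word.simps xvar_def)
  ultimately have "(fa_scale ((x + 1) ^ (n + 1)) (W X1) + fa_scale (x ^ (n + 1)) (W X2) + W X3)
      - fa_scale ((x + 1) ^ (n + 1)) (W X1) - fa_scale (x ^ (n + 1)) (W X2) \<in> basis_span x n"
    by (intro fa.span_diff fa.span_scale)
  then show ?thesis by (simp add: W_def)
qed

lemma nmon_in_basis_span:
  assumes "nmon_deg (a, k, i, b) = n + 3" and "i \<le> 3"
  shows "fa_word (nmon_word (a, k, i, b)) \<in> (basis_span x n :: 'a::field fa set)"
proof -
  have "i = 0 \<or> i = 1 \<or> i = 2 \<or> i = 3" using assms(2) by auto
  then consider "(a, k, i, b) \<in> basis_nmons x n"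
    | "a" "b" "i \<in> {1,2,3}" "k = n" | "a" "\<not> b" "i = 3" "k = n + 1" | "\<not> a" "b" "i \<in> {2,3}" "k = n + 1"
    using assms(1) by (cases a; cases b) (auto simp: basis_nmons_def)
  then show ?thesis
  proof cases
    case 1
    then show ?thesis by (rule basis_nmon_in_basis_span)
  next
    case 2
    then show ?thesis using a_x_b_in_basis_span[of i n x] by (auto simp: nmon_word.simps)
  next
    case 3
    then show ?thesis using a_x3_in_basis_span[of n x] by (simp add: nmon_word.simps xvar_def)
  next
    case 4
    have "fa_word (replicate (n + 1) GC @ [X1, GB]) \<in> (basis_span x n :: 'a fa set)"
      using basis_nmon_in_basis_span[of "(False, n + 1, 1, True)" x n]
      by (simp add: basis_nmons_def nmon_word.simps xvar_def)
    from x_b_in_basis_span[OF this] 4 show ?thesis by (auto simp: nmon_word.simps xvar_def)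
  qed
qed

lemma word_in_basis_span:
  assumes "length w = n + 3"
  shows "fa_word w \<in> (basis_span x n :: 'a::field fa set)"
proof -
  obtain l a k i b where w: "word_smon x w = (l, (a, k, i, b))" by (cases "word_smon x w") auto
  have "fa_of_smon (word_smon x w) \<in> basis_span x n"
  proof (cases "l = 0")
    case True
    then show ?thesis by (simp add: w fa_of_smon_def fa.span_zero)
  next
    case False
    have "i \<le> 3" using word_smon_x_index[of x w] w by simp
    moreover have "nmon_deg (a, k, i, b) = n + 3" using word_smon_deg[of x w] w False assms by simp
    ultimately show ?thesis by (simp add: w fa_of_smon_def fa.span_scale nmon_in_basis_span)
  qed
  moreover have "fa_word w - fa_of_smon (word_smon x w) \<in> basis_span x n"
    using reduce_word[of w x] assms by (simp add: ideal_in_basis_span)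
  ultimately show ?thesis using fa.span_add by fastforce
qed

lemma basis_nmons_deg: "M \<in> basis_nmons x n \<Longrightarrow> nmon_deg M = n + 3"
  by (auto simp: basis_nmons_def split: if_splits)

lemma basis_span_eq_free_deg: "basis_span x n = (free_deg (n + 3) :: 'a::field fa set)"
proof
  have "basis_words x n \<subseteq> free_deg (n + 3)"
    by (auto intro!: fa_word_in_free_deg simp: length_nmon_word basis_nmons_deg simp del: nmon_deg.simps)
  then show "basis_span x n \<subseteq> free_deg (n + 3)"
    using ideal_deg_subset_free_deg[OF rels_ex_subset_free_deg]
    by (intro fa.span_minimal[OF _ subspace_free_deg]) blast
  have "fa.span (fa_word ` {w. length w = n + 3}) \<subseteq> basis_span x n"
    by (intro fa.span_minimal[OF _ fa.subspace_span]) (auto intro: word_in_basis_span)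
  with free_deg_subset_span_words show "free_deg (n + 3) \<subseteq> basis_span x n"
    by blast
qed

section \<open>Coordinate functionals\<close>

text \<open>\<open>basis_coeff x M N\<close> is the coefficient of the basis word \<open>N\<close> when the normal word \<open>M\<close>
  of degree \<open>n + 3\<close> is rewritten in the basis, following the eliminations described above.\<close>

fun basis_coeff :: "'a::field \<Rightarrow> nmon \<Rightarrow> nmon \<Rightarrow> 'a" where
  "basis_coeff x (a, k, i, b) N =
    (if a \<and> \<not> b \<and> i = 3 then
       - ((x + 1) ^ k * (if N = (True, k, 1, False) then 1 else 0)) - x ^ k * (if N = (True, k, 2, False) then 1 else 0)
     else if \<not> a \<and> b \<and> (i = 2 \<or> i = 3) then - (if N = (False, k, 1, True) then 1 else 0)
     else if a \<and> b \<and> i \<noteq> 0 then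
       (if power_additive x k \<and> N = (True, k, 1, True) then if i = 1 then 1 else -1 else 0)
     else if N = (a, k, i, b) then 1 else 0)"

definition smon_coeff :: "'a::field \<Rightarrow> nmon \<Rightarrow> 'a smon \<Rightarrow> 'a" where
  "smon_coeff x N P = fst P * basis_coeff x (snd P) N"

definition coord :: "'a::field \<Rightarrow> nat \<Rightarrow> nmon \<Rightarrow> 'a fa \<Rightarrow> 'a" where
  "coord x m N f = (\<Sum>w\<in>{w. length w = m}. f w * smon_coeff x N (word_smon x w))"

lemma coord_add: "coord x m N (f + g) = coord x m N f + coord x m N g"
  by (simp add: coord_def sum.distrib algebra_simps)

lemma coord_diff: "coord x m N (f - g) = coord x m N f - coord x m N g"
  by (simp add: coord_def sum_subtractf algebra_simps)

lemma coord_scale: "coord x m N (fa_scale c f) = c * coord x m N f"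
  by (simp add: coord_def fa_scale_def sum_distrib_left algebra_simps)

lemma coord_word: "coord x m N (fa_word w) = (if length w = m then smon_coeff x N (word_smon x w) else 0)"
proof -
  have "coord x m N (fa_word w) = (\<Sum>v\<in>{w. length w = m}. if v = w then smon_coeff x N (word_smon x w) else 0)"
    unfolding coord_def by (intro sum.cong refl) (auto simp: fa_word_def)
  then show ?thesis by (simp add: finite_words_length)
qed

lemma coord_zero: "coord x m N 0 = 0"
  by (simp add: coord_def)

lemma smon_coeff_zero: "fst P = 0 \<Longrightarrow> smon_coeff x N P = 0"
  by (simp add: smon_coeff_def)

lemma coord_word_vanishing_factor:
  assumes "fst (word_smon x s) = 0"
  shows "coord x m N (fa_mult (fa_word u) (fa_mult (fa_word s) (fa_word v))) = 0"
  using assms by (simp add: fa_mult_word_word coord_word word_smon_append smon_coeff_zero smon_mult_def)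

lemma smon_coeff_a_L:
  fixes x :: "'a::field" and P Q :: "'a smon"
  defines "A \<equiv> \<lambda>j. smon_mult x P (smon_mult x (1, (True, 0, 0, False)) (smon_mult x (1, (False, 0, j, False)) Q))"
  shows "smon_coeff x N (A 1) + smon_coeff x N (A 2) + smon_coeff x N (A 3) = 0"
proof -
  obtain p a1 k1 i1 b1 where P: "P = (p, a1, k1, i1, b1)" by (cases P) auto
  obtain q a3 k3 i3 b3 where Q: "Q = (q, a3, k3, i3, b3)" by (cases Q) auto
  show ?thesis
  proof (cases "(a1, k1, i1, b1) \<noteq> nmon_one \<or> a3 \<or> i3 \<noteq> 0")
    case True
    then have "fst (A j) = 0" if "j \<noteq> 0" for j
      using that unfolding A_def P Q smon_mult_def by auto
    then show ?thesis by (simp add: smon_coeff_zero)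
  next
    case False
    then have "A j = (p * q * eigen_ex x j ^ k3, (True, k3, j, b3))" if "j \<noteq> 0" for j
      using that by (simp add: A_def P Q smon_mult_def)
    then show ?thesis
      by (cases b3) (simp_all add: smon_coeff_def eigen_ex_def power_additive_def algebra_simps)
  qed
qed

lemma smon_coeff_R_b:
  fixes x :: "'a::field" and P Q :: "'a smon"
  defines "A \<equiv> \<lambda>j. smon_mult x P (smon_mult x (1, (False, 0, j, False)) (smon_mult x (1, (False, 0, 0, True)) Q))"
  shows "(c + d) * smon_coeff x N (A 1) + c * smon_coeff x N (A 2) + d * smon_coeff x N (A 3) = 0"
proof -
  obtain p a1 k1 i1 b1 where P: "P = (p, a1, k1, i1, b1)" by (cases P) auto
  obtain q a3 k3 i3 b3 where Q: "Q = (q, a3, k3, i3, b3)" by (cases Q) auto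
  show ?thesis
  proof (cases "(a3, k3, i3, b3) \<noteq> nmon_one \<or> b1 \<or> i1 \<noteq> 0")
    case True
    then have "fst (A j) = 0" if "j \<noteq> 0" for j
      using that unfolding A_def P Q smon_mult_def by auto
    then show ?thesis by (simp add: smon_coeff_zero)
  next
    case False
    then have "A j = (p * q, (a1, k1, j, True))" if "j \<noteq> 0" for j
      using that by (simp add: A_def P Q smon_mult_def)
    then show ?thesis
      by (cases a1) (simp_all add: smon_coeff_def algebra_simps)
  qed
qed

lemma smon_coeff_x_c:
  fixes x :: "'a::field" and P Q :: "'a smon"
  assumes "j \<noteq> 0"
  shows "smon_coeff x N (smon_mult x P (smon_mult x (1, (False, 0, j, False)) (smon_mult x (1, (False, 1, 0, False)) Q)))
    = eigen_ex x j * smon_coeff x N (smon_mult x P (smon_mult x (1, (False, 1, 0, False)) (smon_mult x (1, (False, 0, j, False)) Q)))"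
proof -
  define E where "E = smon_mult x (1, (False, 1, 0, False)) (smon_mult x (1, (False, 0, j, False)) Q)"
  have "smon_mult x (1, (False, 0, j, False)) (smon_mult x (1, (False, 1, 0, False)) Q) = (eigen_ex x j * fst E, snd E)"
    using assms by (cases Q) (auto simp: smon_mult_def E_def)
  then show ?thesis unfolding E_def[symmetric] by (simp add: smon_mult_def smon_coeff_def algebra_simps)
qed

lemma coord_relation:
  assumes "r \<in> rels_ex x" and "length u + 2 + length v = m"
  shows "coord x m N (fa_mult (fa_word u) (fa_mult r (fa_word v))) = 0"
  using assms(1)
proof (cases rule: rels_exE)
  case (x_x i j)
  have "fst (word_smon x [xvar i, xvar j]) = 0" by (simp add: smon_mult_def xvar_def)
  with x_x show ?thesis by (simp only: coord_word_vanishing_factor)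
next
  case (y_a y)
  have "fst (word_smon x [y, GA]) = 0" by (cases y) (simp_all add: smon_mult_def)
  with y_a show ?thesis by (simp only: coord_word_vanishing_factor)
next
  case (b_y y)
  have "fst (word_smon x [GB, y]) = 0" by (cases y) (simp_all add: smon_mult_def)
  with b_y show ?thesis by (simp only: coord_word_vanishing_factor)
next
  case (a_L t)
  then show ?thesis using assms(2) smon_coeff_a_L[where P="word_smon x u" and Q="word_smon x v" and N=N]
    by (simp add: fa_mult_simps coord_add coord_scale coord_word word_smon_append distrib_left[symmetric])
next
  case (R_b c d)
  then show ?thesis using assms(2) smon_coeff_R_b[where P="word_smon x u" and Q="word_smon x v" and c=c and d=d and N=N]
    by (simp add: fa_mult_simps coord_add coord_scale coord_word word_smon_append)
next
  case (x_c i)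
  then have "i \<noteq> 0" "gen_nmon (xvar i) = (False, 0, i, False)" by (auto simp: xvar_def)
  with x_c show ?thesis using assms(2) smon_coeff_x_c[where j=i and P="word_smon x u" and Q="word_smon x v" and N=N]
    by (simp add: fa_mult_simps coord_diff coord_scale coord_word word_smon_append)
qed

lemma coord_ideal: "f \<in> ideal_ex x m \<Longrightarrow> coord x m N f = 0"
proof -
  assume f: "f \<in> ideal_ex x m"
  have "ideal_ex x m \<subseteq> {f. coord x m N f = 0}"
    unfolding ideal_deg_def
    by (rule fa.span_minimal) (auto simp: fa.subspace_def coord_zero coord_add coord_scale coord_relation)
  then show ?thesis using f by blast
qed

lemma word_smon_replicate_c: "word_smon x (replicate k GC) = (1, (False, k, 0, False))"
  by (induction k) (auto simp: smon_mult_def)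

lemma word_smon_nmon_word: "i \<le> 3 \<Longrightarrow> word_smon x (nmon_word (a, k, i, b)) = (1, (a, k, i, b))"
  by (cases a; cases b; cases "i = 0")
     (auto simp: nmon_word.simps word_smon_append word_smon_replicate_c smon_mult_def xvar_def)

lemma basis_nmons_x_index: "(a, k, i, b) \<in> basis_nmons x n \<Longrightarrow> i \<le> 3"
  by (auto simp: basis_nmons_def split: if_splits)

lemma basis_coeff_basis: "M \<in> basis_nmons x n \<Longrightarrow> basis_coeff x M N = (if N = M then 1 else 0)"
  unfolding basis_nmons_def by (elim UnE insertE; simp split: if_splits)

lemma coord_basis_word:
  assumes "M \<in> basis_nmons x n"
  shows "coord x (n + 3) N (fa_word (nmon_word M)) = (if N = M then 1 else 0)"
proof -
  obtain a k i b where M: "M = (a, k, i, b)" by (cases M)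
  then have "i \<le> 3" using assms basis_nmons_x_index by blast
  then have "word_smon x (nmon_word M) = (1, M)" by (simp add: M word_smon_nmon_word)
  moreover have "length (nmon_word M) = n + 3"
    using assms by (simp add: length_nmon_word basis_nmons_deg del: nmon_deg.simps)
  ultimately show ?thesis using basis_coeff_basis[OF assms] by (simp add: coord_word smon_coeff_def)
qed

lemma card_basis_nmons: "card (basis_nmons x n) = (if power_additive x n then 11 else 10)"
  by (simp add: basis_nmons_def)

lemma hilbA_ex: "hilbA L_ex R_ex (sigma_ex x) (n + 3) = (if power_additive (x::'a::field) n then 11 else 10)"
proof -
  have "fa.dim (free_deg (n + 3) :: 'a fa set) = fa.dim (ideal_ex x (n + 3) \<union> basis_words x n)"
    using fa.dim_span[of "ideal_ex x (n + 3) \<union> basis_words x n"] basis_span_eq_free_deg[of x n] by simp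
  also have "\<dots> = fa.dim (ideal_ex x (n + 3)) + card (basis_nmons x n)"
  proof (rule fa.dim_Un_dual_family)
    show "fa.subspace (ideal_ex x (n + 3))" by (rule subspace_ideal_deg)
    show "ideal_ex x (n + 3) \<subseteq> fa.span (fa_word ` {w. length w = n + 3})"
      using ideal_deg_subset_free_deg[OF rels_ex_subset_free_deg] free_deg_subset_span_words by blast
    show "finite (fa_word ` {w. length w = n + 3})" by (simp add: finite_words_length)
    show "finite (basis_nmons x n)" by (simp add: basis_nmons_def)
    show "coord x (n + 3) N (u + v) = coord x (n + 3) N u + coord x (n + 3) N v" for N u v
      by (rule coord_add)
    show "coord x (n + 3) N (fa_scale c u) = c * coord x (n + 3) N u" for N c u
      by (rule coord_scale)
    show "coord x (n + 3) N f = 0" if "f \<in> ideal_ex x (n + 3)" for N f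
      using that by (rule coord_ideal)
    show "coord x (n + 3) N (fa_word (nmon_word M)) = (if N = M then 1 else 0)"
      if "M \<in> basis_nmons x n" for N M
      using that by (rule coord_basis_word)
  qed
  finally show ?thesis by (simp add: hilbA_def card_basis_nmons)
qed

theorem proposition5p6:
  fixes x :: "'a::field" and p :: nat
  assumes charp: "CHAR('a) = p" and ppos: "p > 0"
    and transc: "\<And>q :: 'a poly. q \<noteq> 0 \<Longrightarrow> (\<forall>i. coeff q i \<in> range of_nat) \<Longrightarrow> poly q x \<noteq> 0"
  defines "\<sigma> \<equiv> (\<lambda>(v1, v2, v3). ((x + 1) * v1, x * v2, v3))"
    and "L \<equiv> {(c, c, c) | c :: 'a. True}"
    and "R \<equiv> {(c + d, c, d) | c d :: 'a. True}"
  shows "(\<forall>n. hilbA L R \<sigma> (n + 3) = (if \<exists>k. n = p ^ k then 11 else 10))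
       \<and> \<not> (\<exists>T>0. \<exists>N. \<forall>n\<ge>N. hilbA L R \<sigma> (n + T) = hilbA L R \<sigma> n)
       \<and> \<not> (\<exists>P Q :: rat poly. Q \<noteq> 0 \<and>
              fps_of_poly Q * Abs_fps (\<lambda>n. of_nat (hilbA L R \<sigma> n)) = fps_of_poly P)"
proof -
  have p: "prime p" using charp ppos by (metis prime_CHAR_semidom)
  then have "1 < p" by (rule prime_gt_1_nat)
  have "hilbA L R \<sigma> = hilbA L_ex R_ex (sigma_ex x)"
    unfolding \<sigma>_def L_def R_def sigma_ex_def L_ex_def R_ex_def by simp
  then have hilb: "hilbA L R \<sigma> (n + 3) = (if \<exists>k. n = p ^ k then 11 else 10)" for n
    using hilbA_ex[of x n] power_additive_iff_prime_power[OF p[folded charp] transc, of n] charp by simp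
  have spikes: "power_spikes (hilbA L R \<sigma>) p 3 11 10"
    by unfold_locales (fact \<open>1 < p\<close>, rule hilb)
  have spikes_rat: "power_spikes (\<lambda>n. of_nat (hilbA L R \<sigma> n) :: rat) p 3 11 10"
    by unfold_locales (fact \<open>1 < p\<close>, simp add: hilb)
  show ?thesis
    using hilb power_spikes_not_eventually_periodic[OF spikes] power_spikes_not_rational[OF spikes_rat]
    by simp
qed

end
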